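(* Let $t\ge1$, $k\ge1$, $N\ge1$ with $\log k\le N/(4t)$. Let $A^1,\dots,A^k$ be (jointly distributed) random variables, each taking values in $\{0,1\}^N$, such that $\max_{a^1,\dots,a^k}\Pr[A^1\cdots A^k=a^1\cdots a^k]\le2^{-Nk/t}$. Then $$\Pr\Big[\big|\{A^1,\dots,A^k\}\big|\le\tfrac{k}{2t}\Big]\le2^{-Nk/(4t)},$$ i.e., the probability that $A^1,\dots,A^k$ take at most $k/(2t)$ distinct values is at most $2^{-Nk/(4t)}$.
   Context: Logarithms are base 2. *)

theory Defs
  imports "HOL-Probability.Probability"
begin

end

theory Submission
  imports Defs
begin

text \<open>If \<open>A\<^sup>1, \<dots>, A\<^sup>k\<close> take at most \<open>m \<le> k/(2t)\<close> distinct values, the tuple is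
  determined by a list of \<open>m\<close> strings together with a map \<open>{1..k} \<rightarrow> {1..m}\<close>, so there
  are at most \<open>2^(Nm) \<cdot> m^k \<le> 2^(Nk/(2t)) \<cdot> 2^(Nk/(4t))\<close> such tuples, where
  \<open>m^k \<le> k^k = 2^(k log k)\<close>. Each has probability at most \<open>2^(-Nk/t)\<close>, and the exponents
  add up to \<open>-Nk/(4t)\<close>.\<close>

lemma exists_list_with_set_length:
  assumes "finite D" "D \<noteq> {}" "card D \<le> m"
  shows "\<exists>ws. set ws = D \<and> length ws = m"
proof -
  obtain xs where xs: "set xs = D" "distinct xs"
    using finite_distinct_list[OF assms(1)] by blast
  have "xs \<noteq> []" using xs assms(2) by auto
  then have "set (xs @ replicate (m - card D) (hd xs)) = D"
    using xs by (auto simp: hd_in_set)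
  moreover have "length (xs @ replicate (m - card D) (hd xs)) = m"
    using xs assms(3) distinct_card by fastforce
  ultimately show ?thesis by blast
qed

lemma lists_few_distinct_subset_image:
  assumes "0 < k"
  shows "{as. length as = k \<and> set as \<subseteq> B \<and> card (set as) \<le> m}
    \<subseteq> (\<lambda>(ws, f). map (\<lambda>i. ws ! f i) [0..<k])
        ` ({ws. set ws \<subseteq> B \<and> length ws = m} \<times> ({0..<k} \<rightarrow>\<^sub>E {0..<m}))"
proof
  fix as assume "as \<in> {as. length as = k \<and> set as \<subseteq> B \<and> card (set as) \<le> m}"
  then have as: "length as = k" "set as \<subseteq> B" "card (set as) \<le> m" by auto
  have "set as \<noteq> {}" using as(1) assms by auto
  then obtain ws where ws: "set ws = set as" "length ws = m"
    using exists_list_with_set_length[OF finite_set _ as(3)] by blast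
  have "\<forall>i \<in> {0..<k}. \<exists>j. j < m \<and> ws ! j = as ! i"
    using ws as(1) by (metis atLeastLessThan_iff in_set_conv_nth nth_mem)
  then obtain g where g: "\<And>i. i < k \<Longrightarrow> g i < m \<and> ws ! g i = as ! i"
    by (metis atLeastLessThan_iff bot_nat_0.extremum)
  let ?f = "restrict g {0..<k}"
  have "?f \<in> {0..<k} \<rightarrow>\<^sub>E {0..<m}" using g by auto
  moreover have "ws \<in> {ws. set ws \<subseteq> B \<and> length ws = m}" using ws as(2) by auto
  moreover have "map (\<lambda>i. ws ! ?f i) [0..<k] = as" using as(1) g by (auto intro: nth_equalityI)
  ultimately show "as \<in> (\<lambda>(ws, f). map (\<lambda>i. ws ! f i) [0..<k])
        ` ({ws. set ws \<subseteq> B \<and> length ws = m} \<times> ({0..<k} \<rightarrow>\<^sub>E {0..<m}))"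
    by (auto intro!: image_eqI[where x = "(ws, ?f)"])
qed

lemma card_lists_few_distinct_le:
  assumes "finite B" "0 < k"
  shows "card {as. length as = k \<and> set as \<subseteq> B \<and> card (set as) \<le> m} \<le> card B ^ m * m ^ k"
proof -
  let ?W = "{ws. set ws \<subseteq> B \<and> length ws = m}" and ?F = "{0..<k} \<rightarrow>\<^sub>E {0..<m}"
  have fin: "finite (?W \<times> ?F)"
    using finite_lists_length_eq[OF assms(1)] by (intro finite_cartesian_product finite_PiE) auto
  have "card {as. length as = k \<and> set as \<subseteq> B \<and> card (set as) \<le> m}
      \<le> card ((\<lambda>(ws, f). map (\<lambda>i. ws ! f i) [0..<k]) ` (?W \<times> ?F))"
    using lists_few_distinct_subset_image[OF assms(2)] fin by (intro card_mono) auto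
  also have "\<dots> \<le> card ?W * card ?F"
    using card_image_le[OF fin] by (simp add: card_cartesian_product)
  also have "\<dots> = card B ^ m * m ^ k"
    using assms(1) by (simp add: card_lists_length_eq card_PiE)
  finally show ?thesis .
qed

lemma measure_pmf_le_card_mult_bound:
  assumes "A \<inter> set_pmf p \<subseteq> S" "finite S" "\<And>x. x \<in> S \<Longrightarrow> pmf p x \<le> c"
  shows "measure_pmf.prob p A \<le> real (card S) * c"
proof -
  have "measure_pmf.prob p A = measure_pmf.prob p (A \<inter> set_pmf p)"
    by (simp add: measure_Int_set_pmf)
  also have "\<dots> \<le> measure_pmf.prob p S"
    using assms(1) by (intro measure_pmf.finite_measure_mono) auto
  also have "\<dots> = (\<Sum>x\<in>S. pmf p x)"
    using assms(2) by (simp add: measure_measure_pmf_finite)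
  also have "\<dots> \<le> real (card S) * c"
    using sum_mono[of S "pmf p" "\<lambda>_. c"] assms(3) by simp
  finally show ?thesis .
qed

lemma power_le_powr_of_log_le:
  assumes "m \<le> k" "0 < k" "log 2 (real k) \<le> x"
  shows "real m ^ k \<le> 2 powr (x * real k)"
proof -
  have "real m ^ k \<le> real k ^ k" using assms(1) by (simp add: power_mono)
  also have "\<dots> = 2 powr (log 2 (real k) * real k)"
    using assms(2) by (simp add: powr_powr[symmetric] powr_realpow)
  also have "\<dots> \<le> 2 powr (x * real k)"
    using assms(3) by (intro powr_mono mult_right_mono) auto
  finally show ?thesis .
qed

theorem mainTheorem18:
  fixes t :: real and k N :: nat and p :: "bool list list pmf"
  assumes "t \<ge> 1" and "k \<ge> 1" and "N \<ge> 1"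
    and "log 2 (real k) \<le> real N / (4 * t)"
    and "\<And>as. as \<in> set_pmf p \<Longrightarrow> length as = k \<and> (\<forall>a \<in> set as. length a = N)"
    and "\<And>as. pmf p as \<le> 2 powr (- (real N * real k / t))"
  shows "measure_pmf.prob p {as. real (card (set as)) \<le> real k / (2 * t)}
           \<le> 2 powr (- (real N * real k / (4 * t)))"
proof -
  define m where "m = nat \<lfloor>real k / (2 * t)\<rfloor>"
  define B where "B = {a :: bool list. length a = N}"
  let ?S = "{as. length as = k \<and> set as \<subseteq> B \<and> card (set as) \<le> m}"
  have m_le: "real m \<le> real k / (2 * t)"
    using assms(1) by (simp add: m_def)
  moreover have "real k / (2 * t) \<le> real k"
    using assms(1) by (simp add: divide_le_eq mult_le_cancel_left1)
  ultimately have "m \<le> k" by linarith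
  have B: "finite B" "card B = 2 ^ N"
    using card_lists_length_eq[of "UNIV :: bool set" N] finite_lists_length_eq[of "UNIV :: bool set" N]
    by (simp_all add: B_def card_UNIV_bool)
  have "{as. real (card (set as)) \<le> real k / (2 * t)} \<inter> set_pmf p \<subseteq> ?S"
    using assms(5) by (auto simp: B_def m_def le_nat_iff le_floor_iff)
  then have "measure_pmf.prob p {as. real (card (set as)) \<le> real k / (2 * t)}
      \<le> real (card ?S) * 2 powr (- (real N * real k / t))"
    using finite_lists_length_eq[OF B(1), of k]
    by (intro measure_pmf_le_card_mult_bound assms(6)) (auto elim: rev_finite_subset)
  also have "\<dots> \<le> (2 powr (real N * real m) * real m ^ k) * 2 powr (- (real N * real k / t))"
  proof (rule mult_right_mono)
    have "card ?S \<le> 2 ^ (N * m) * m ^ k"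
      using card_lists_few_distinct_le[OF B(1), of k m] assms(2) B(2) by (simp add: power_mult)
    then have "real (card ?S) \<le> 2 ^ (N * m) * real m ^ k"
      unfolding of_nat_le_iff[symmetric, where 'a = real] by simp
    then show "real (card ?S) \<le> 2 powr (real N * real m) * real m ^ k"
      by (simp add: powr_realpow[symmetric])
  qed simp
  also have "\<dots> \<le> (2 powr (real N * real k / (2 * t)) * 2 powr (real N / (4 * t) * real k))
                   * 2 powr (- (real N * real k / t))"
    using mult_left_mono[OF m_le, of "real N"] \<open>m \<le> k\<close> assms(2,4)
    by (intro mult_right_mono mult_mono power_le_powr_of_log_le) auto
  also have "\<dots> = 2 powr (- (real N * real k / (4 * t)))"
    using assms(1) by (simp add: powr_add[symmetric] field_simps)
  finally show ?thesis .
qed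

end
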